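(* Let $M\ge2$ and $a\in(0,\frac1M)$. Let $F_a$ be either $f_a$ on $[0,1]^d$ with $d=2$, or $g_a=f_{a,\frac1M-a}$ on $[0,1]^d$ with $d=3$. Then for Lebesgue-almost every pair $(x,y)\in[0,1]^d\times[0,1]^d$, $$\liminf_{n\to\infty}{\rm dist}(F_a^n(x),F_a^n(y))=0\quad\text{and}\quad\limsup_{n\to\infty}{\rm dist}(F_a^n(x),F_a^n(y))=\sqrt d,$$ where ${\rm dist}$ is the Euclidean distance. In other words, Lebesgue-almost every pair is a Li–Yorke pair of $F_a$.
   Context: Fix an integer $M\ge2$. $\tau_a$ is given by - $\tau_a(x)=\frac{x-(k-1)a}{a}$ on $[(k-1)a,ka)$, $k=1,\dots,M$; - $\tau_a(x)=\frac{x-Ma}{1-Ma}$ on $[Ma,1]$. Put - $\Omega^+_{\alpha_k}=[(k-1)a,ka)\times[0,1]$; - $\Omega^+_{\beta_k}=[Ma,1]\times[\frac{k-1}M,\frac kM)$ for $k\le M-1$; - $\Omega^+_{\beta_M}=[Ma,1]\times[\frac{M-1}M,1]$. $f_a$ is given by - $f_a(x_u,x_c)=(\tau_a(x_u),\frac{x_c}M+\frac{k-1}M)$ on $\Omega^+_{\alpha_k}$; - $f_a(x_u,x_c)=(\tau_a(x_u),Mx_c-k+1)$ on $\Omega^+_{\beta_k}$. For $(a,b)\in(0,\frac1M)^2$, with $\Omega_\gamma=\Omega^+_\gamma\times[0,1]$, $f_{a,b}$ is given by - $f_{a,b}(x_u,x_c,x_s)=(f_a(x_u,x_c),(1-Mb)x_s)$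 on $\Omega_{\alpha_k}$; - $f_{a,b}(x_u,x_c,x_s)=(f_a(x_u,x_c),bx_s+1+b(k-M-1))$ on $\Omega_{\beta_k}$. *)

theory Defs
  imports "HOL-Analysis.Analysis"
begin

definition alpha_idx :: "real \<Rightarrow> real \<Rightarrow> nat" where
  "alpha_idx a x = nat \<lfloor>x / a\<rfloor> + 1"

text \<open>Index k with x_c in [(k-1)/M, k/M) for k <= M-1, and k = M on [(M-1)/M, 1].\<close>
definition beta_idx :: "nat \<Rightarrow> real \<Rightarrow> nat" where
  "beta_idx M c = min M (nat \<lfloor>real M * c\<rfloor> + 1)"

definition tau :: "nat \<Rightarrow> real \<Rightarrow> real \<Rightarrow> real" where
  "tau M a x = (if x < real M * a
      then (x - (real (alpha_idx a x) - 1) * a) / a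
      else (x - real M * a) / (1 - real M * a))"

definition f2 :: "nat \<Rightarrow> real \<Rightarrow> real \<times> real \<Rightarrow> real \<times> real" where
  "f2 M a p = (case p of (u, c) \<Rightarrow>
     (tau M a u,
      if u < real M * a
      then c / real M + (real (alpha_idx a u) - 1) / real M
      else real M * c - real (beta_idx M c) + 1))"

definition f3 :: "nat \<Rightarrow> real \<Rightarrow> real \<Rightarrow> real \<times> real \<times> real \<Rightarrow> real \<times> real \<times> real" where
  "f3 M a b p = (case p of (u, c, s) \<Rightarrow>
     (fst (f2 M a (u, c)), snd (f2 M a (u, c)),
      if u < real M * a
      then (1 - real M * b) * s
      else b * s + 1 + b * (real (beta_idx M c) - real M - 1)))"

end

theory Submission
  imports Defs
begin

text \<open>
  The base map \<open>\<tau>\<close> is a full-branched piecewise affine map of \<open>[0,1)\<close> with \<open>M + 1\<close> branches of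
  lengths \<open>a, \<dots>, a, 1 - M a\<close>; it preserves Lebesgue measure, and on the cylinder of a digit word the
  corresponding iterate is affine onto \<open>[0,1)\<close>. Hence for a pair \<open>(u, v)\<close> the events
  ``the digit words of \<open>u\<close> and \<open>v\<close> in the \<open>j\<close>-th block of length \<open>K\<close> are \<open>w\<^sub>1\<close> and \<open>w\<^sub>2\<close>''
  are independent with a fixed positive probability, and almost every pair realises every such
  pattern infinitely often.

  The fibre coordinates are driven by the digits: a run of the digit \<open>1\<close> contracts \<open>x\<^sub>c\<close> and \<open>x\<^sub>s\<close>
  towards \<open>0\<close> (and, read backwards, forces \<open>x\<^sub>u\<close> to be small), while a run of \<open>M\<close> followed by a run
  of \<open>M + 1\<close> pushes every coordinate to \<open>1\<close>. Seeing the pattern \<open>(1\<^sup>4\<^sup>L, 1\<^sup>4\<^sup>L)\<close> infinitely often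
  brings the orbits together, and seeing \<open>(1\<^sup>4\<^sup>L, M\<^sup>2\<^sup>L (M+1)\<^sup>2\<^sup>L)\<close> puts them at opposite corners
  of the cube, at distance close to its diameter \<open>\<surd>d\<close>.
\<close>

section \<open>Li--Yorke pairs in the unit cube\<close>

lemma Liminf_le_if_frequently:
  fixes f :: "_ \<Rightarrow> 'a::complete_linorder"
  assumes "\<exists>\<^sub>F x in F. f x \<le> l"
  shows "Liminf F f \<le> l"
proof (rule ccontr)
  assume "\<not> Liminf F f \<le> l"
  then have "eventually (\<lambda>x. l < f x) F" by (intro less_LiminfD) simp
  then have "eventually (\<lambda>x. \<not> f x \<le> l) F" by (rule eventually_mono) simp
  with assms show False by (simp add: frequently_def)
qed

lemma le_Limsup_if_frequently:
  fixes f :: "_ \<Rightarrow> 'a::complete_linorder"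
  assumes "\<exists>\<^sub>F x in F. l \<le> f x"
  shows "l \<le> Limsup F f"
proof (rule ccontr)
  assume "\<not> l \<le> Limsup F f"
  then have "eventually (\<lambda>x. f x < l) F" by (intro Limsup_lessD) simp
  then have "eventually (\<lambda>x. \<not> l \<le> f x) F" by (rule eventually_mono) simp
  with assms show False by (simp add: frequently_def)
qed

lemma dist_le_sqrt_DIM_mult:
  fixes x y :: "'a::euclidean_space"
  assumes "\<And>i. i \<in> Basis \<Longrightarrow> \<bar>x \<bullet> i - y \<bullet> i\<bar> \<le> d"
  shows "dist x y \<le> sqrt DIM('a) * d"
proof -
  have "dist x y = L2_set (\<lambda>i. dist (x \<bullet> i) (y \<bullet> i)) Basis"
    by (rule euclidean_dist_l2)
  also have "\<dots> \<le> L2_set (\<lambda>i. d) (Basis :: 'a set)"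
    using assms by (intro L2_set_mono) (auto simp: dist_real_def)
  also have "\<dots> = sqrt DIM('a) * d"
    using assms[OF SOME_Basis] by (simp add: L2_set_constant)
  finally show ?thesis .
qed

lemma sqrt_DIM_mult_le_dist:
  fixes x y :: "'a::euclidean_space"
  assumes "0 \<le> d" "\<And>i. i \<in> Basis \<Longrightarrow> d \<le> \<bar>x \<bullet> i - y \<bullet> i\<bar>"
  shows "sqrt DIM('a) * d \<le> dist x y"
proof -
  have "sqrt DIM('a) * d = L2_set (\<lambda>i. d) (Basis :: 'a set)"
    using assms(1) by (simp add: L2_set_constant)
  also have "\<dots> \<le> L2_set (\<lambda>i. dist (x \<bullet> i) (y \<bullet> i)) Basis"
    using assms by (intro L2_set_mono) (auto simp: dist_real_def)
  also have "\<dots> = dist x y"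
    by (rule euclidean_dist_l2[symmetric])
  finally show ?thesis .
qed

lemma liminf_dist_eq_0_if_frequently_close:
  fixes X Y :: "nat \<Rightarrow> 'a::euclidean_space"
  assumes close: "\<And>e. 0 < e \<Longrightarrow> \<exists>\<^sub>F n in sequentially. X n \<in> cbox 0 (e *\<^sub>R One) \<and> Y n \<in> cbox 0 (e *\<^sub>R One)"
  shows "liminf (\<lambda>n. ereal (dist (X n) (Y n))) = 0"
proof -
  have sqrt_DIM: "0 < sqrt DIM('a)" by simp
  have "liminf (\<lambda>n. ereal (dist (X n) (Y n))) \<le> 0 + ereal e" if "0 < e" for e
  proof (rule Liminf_le_if_frequently)
    have "\<exists>\<^sub>F n in sequentially.
      X n \<in> cbox 0 ((e / sqrt DIM('a)) *\<^sub>R One) \<and> Y n \<in> cbox 0 ((e / sqrt DIM('a)) *\<^sub>R One)"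
      using close sqrt_DIM that by simp
    then show "\<exists>\<^sub>F n in sequentially. ereal (dist (X n) (Y n)) \<le> 0 + ereal e"
    proof (rule frequently_elim1)
      fix n assume "X n \<in> cbox 0 ((e / sqrt DIM('a)) *\<^sub>R One) \<and> Y n \<in> cbox 0 ((e / sqrt DIM('a)) *\<^sub>R One)"
      then have "dist (X n) (Y n) \<le> sqrt DIM('a) * (e / sqrt DIM('a))"
        by (intro dist_le_sqrt_DIM_mult) (fastforce simp: mem_box abs_le_iff)
      then show "ereal (dist (X n) (Y n)) \<le> 0 + ereal e" by simp
    qed
  qed
  then have "liminf (\<lambda>n. ereal (dist (X n) (Y n))) \<le> 0" by (rule ereal_le_epsilon2)
  moreover have "0 \<le> liminf (\<lambda>n. ereal (dist (X n) (Y n)))" by (intro Liminf_bounded) simp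
  ultimately show ?thesis by (rule antisym)
qed

lemma limsup_dist_eq_sqrt_DIM_if_frequently_apart:
  fixes X Y :: "nat \<Rightarrow> 'a::euclidean_space"
  assumes cube: "\<And>n. X n \<in> cbox 0 One" "\<And>n. Y n \<in> cbox 0 One"
    and apart: "\<And>e. 0 < e \<Longrightarrow>
      \<exists>\<^sub>F n in sequentially. X n \<in> cbox 0 (e *\<^sub>R One) \<and> Y n \<in> cbox ((1 - e) *\<^sub>R One) One"
  shows "limsup (\<lambda>n. ereal (dist (X n) (Y n))) = ereal (sqrt DIM('a))"
proof -
  have sqrt_DIM: "0 < sqrt DIM('a)" by simp
  have "dist (X n) (Y n) \<le> sqrt DIM('a) * 1" for n
    using cube[of n] by (intro dist_le_sqrt_DIM_mult) (fastforce simp: mem_box abs_le_iff)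
  then have "limsup (\<lambda>n. ereal (dist (X n) (Y n))) \<le> ereal (sqrt DIM('a))"
    by (intro Limsup_bounded) simp
  moreover have "ereal (sqrt DIM('a)) \<le> limsup (\<lambda>n. ereal (dist (X n) (Y n))) + ereal e" if "0 < e" for e
  proof -
    define m where "m = min (e / (2 * sqrt DIM('a))) (1/2)"
    have "m \<le> e / (2 * sqrt DIM('a))" by (simp add: m_def)
    then have "sqrt DIM('a) * (2 * m) \<le> e"
      using sqrt_DIM by (simp add: field_simps)
    moreover have "0 < m" "m \<le> 1/2" using that by (auto simp: m_def)
    ultimately have m: "0 < m" "m \<le> 1/2" "sqrt DIM('a) * (2 * m) \<le> e" by auto
    have "\<exists>\<^sub>F n in sequentially. ereal (sqrt DIM('a) - e) \<le> ereal (dist (X n) (Y n))"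
      using apart[OF m(1)]
    proof (rule frequently_elim1)
      fix n assume "X n \<in> cbox 0 (m *\<^sub>R One) \<and> Y n \<in> cbox ((1 - m) *\<^sub>R One) One"
      then have "X n \<bullet> i \<le> m" "1 - m \<le> Y n \<bullet> i" if "i \<in> Basis" for i
        using that by (auto simp: mem_box)
      then have "sqrt DIM('a) * (1 - 2 * m) \<le> dist (X n) (Y n)"
        using m by (intro sqrt_DIM_mult_le_dist) force+
      then show "ereal (sqrt DIM('a) - e) \<le> ereal (dist (X n) (Y n))"
        using m(3) by (simp add: algebra_simps)
    qed
    then have "ereal (sqrt DIM('a) - e) \<le> limsup (\<lambda>n. ereal (dist (X n) (Y n)))"
      by (rule le_Limsup_if_frequently)
    then show ?thesis
      by (cases "limsup (\<lambda>n. ereal (dist (X n) (Y n)))") auto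
  qed
  then have "ereal (sqrt DIM('a)) \<le> limsup (\<lambda>n. ereal (dist (X n) (Y n)))" by (rule ereal_le_epsilon2)
  ultimately show ?thesis by (rule antisym)
qed

lemma Li_Yorke_in_unit_cube:
  fixes X Y :: "nat \<Rightarrow> 'a::euclidean_space"
  assumes "\<And>n. X n \<in> cbox 0 One" "\<And>n. Y n \<in> cbox 0 One"
    and "\<And>e. 0 < e \<Longrightarrow> \<exists>\<^sub>F n in sequentially. X n \<in> cbox 0 (e *\<^sub>R One) \<and> Y n \<in> cbox 0 (e *\<^sub>R One)"
    and "\<And>e. 0 < e \<Longrightarrow>
      \<exists>\<^sub>F n in sequentially. X n \<in> cbox 0 (e *\<^sub>R One) \<and> Y n \<in> cbox ((1 - e) *\<^sub>R One) One"
  shows "liminf (\<lambda>n. ereal (dist (X n) (Y n))) = 0 \<and>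
    limsup (\<lambda>n. ereal (dist (X n) (Y n))) = ereal (sqrt DIM('a))"
  using liminf_dist_eq_0_if_frequently_close limsup_dist_eq_sqrt_DIM_if_frequently_apart assms
  by blast

lemmas cbox_prod_simps = Basis_prod_def sum.union_disjoint zero_prod_def cbox_Pair_eq image_iff

lemma ennreal_eq_0_if_le_powers:
  fixes x :: ennreal and c :: real
  assumes "0 \<le> c" "c < 1" "\<And>m. x \<le> ennreal (c ^ m)"
  shows "x = 0"
proof -
  have "x \<noteq> \<infinity>" using assms(3)[of 0] by (auto simp: top_unique)
  then obtain r where r: "x = ennreal r" "0 \<le> r" by (cases x rule: ennreal_cases) auto
  have "r \<le> c ^ m" for m using assms(3)[of m] r assms(1) by (simp add: ennreal_le_iff)
  moreover have "(\<lambda>m. c ^ m) \<longlonglongrightarrow> 0" using assms by (intro LIMSEQ_power_zero) auto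
  ultimately have "r \<le> 0" by (intro LIMSEQ_le_const[of "\<lambda>m. c ^ m"]) auto
  then show ?thesis using r by simp
qed

lemma AE_lborel_fst:
  assumes "AE x in (lborel :: 'a::euclidean_space measure). P x"
  shows "AE z in (lborel :: ('a \<times> 'b::euclidean_space) measure). P (fst z)"
proof -
  obtain N where N: "N \<in> null_sets lborel" "{x \<in> space lborel. \<not> P x} \<subseteq> N"
    using assms unfolding eventually_ae_filter by blast
  have "N \<times> UNIV \<in> null_sets (lborel \<Otimes>\<^sub>M (lborel :: 'b measure))"
    using N by (intro lborel.times_in_null_sets1) auto
  then have "AE z in lborel \<Otimes>\<^sub>M (lborel :: 'b measure). P (fst z)"
    by (rule AE_I') (use N in auto)
  then show ?thesis by (metis lborel_prod)
qed

lemma AE_lborel_fst_fst: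
  fixes P :: "real \<times> real \<Rightarrow> bool"
  assumes [measurable]: "Measurable.pred (borel \<Otimes>\<^sub>M borel) P"
    and "AE z in lborel \<Otimes>\<^sub>M lborel. P z"
  shows "AE p in (lborel :: ((real \<times> 'b::euclidean_space) \<times> (real \<times> 'b)) measure).
    P (fst (fst p), fst (snd p))"
proof -
  let ?L = "lborel :: (real \<times> 'b) measure"
  have "AE x in lborel. AE y in lborel. P (x, y)" using lborel_pair.AE_pair[OF assms(2)] .
  then have "AE x in ?L. AE y in lborel. P (fst x, y)"
    by (rule AE_lborel_fst)
  then have "AE x in ?L. AE y in ?L. P (fst x, fst y)"
    by (rule eventually_mono) (rule AE_lborel_fst)
  moreover have "sets ?L = sets (borel \<Otimes>\<^sub>M borel)" by (metis borel_prod sets_lborel)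
  then have "(\<lambda>p. (fst (fst p), fst (snd p))) \<in> ?L \<Otimes>\<^sub>M ?L \<rightarrow>\<^sub>M borel \<Otimes>\<^sub>M borel"
    by (subst measurable_cong_sets[OF sets_pair_measure_cong refl]) (assumption+, measurable)
  from measurable_compose[OF this assms(1)]
  have "{p \<in> space (?L \<Otimes>\<^sub>M ?L). P (fst (fst p), fst (snd p))} \<in> sets (?L \<Otimes>\<^sub>M ?L)"
    by (intro predE) (simp add: comp_def)
  ultimately have "AE p in ?L \<Otimes>\<^sub>M ?L. P (fst (fst p), fst (snd p))"
    using lborel_pair.AE_pair_measure[where P="\<lambda>p. P (fst (fst p), fst (snd p))"] by (simp only: fst_conv snd_conv)
  then show ?thesis by (metis lborel_prod)
qed

section \<open>The base map \<open>\<tau>\<close>\<close>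

locale tau_params =
  fixes M :: nat and a :: real
  assumes M_ge_2: "2 \<le> M" and a_pos: "0 < a" and a_lt: "a < 1 / real M"
begin

lemma M_pos: "0 < real M"
  using M_ge_2 by simp

lemma Ma_lt_1: "real M * a < 1"
  using a_lt M_pos by (simp add: field_simps)

lemma borel_measurable_tau [measurable]: "tau M a \<in> borel_measurable borel"
  unfolding tau_def alpha_idx_def by measurable

lemma borel_measurable_funpow_tau [measurable]: "tau M a ^^ n \<in> borel_measurable borel"
  by (induction n) auto

definition digit :: "real \<Rightarrow> nat" where
  "digit u = (if u < real M * a then alpha_idx a u else M + 1)"

lemma measurable_digit [measurable]: "digit \<in> measurable borel (count_space UNIV)"
  unfolding digit_def alpha_idx_def by measurable

definition branch_len :: "nat \<Rightarrow> real" where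
  "branch_len k = (if k \<le> M then a else 1 - real M * a)"

definition branch_start :: "nat \<Rightarrow> real" where
  "branch_start k = (if k \<le> M then (real k - 1) * a else real M * a)"

definition branch :: "nat \<Rightarrow> real set" where
  "branch k = {branch_start k ..< branch_start k + branch_len k}"

definition branch_inv :: "nat \<Rightarrow> real \<Rightarrow> real" where
  "branch_inv k t = branch_start k + branch_len k * t"

lemma branch_len_pos: "0 < branch_len k"
  using a_pos Ma_lt_1 by (simp add: branch_len_def)

lemma branch_len_le_1: "branch_len k \<le> 1"
proof -
  have "1 / real M \<le> 1" using M_ge_2 by simp
  then have "a \<le> 1" using a_lt by linarith
  then show ?thesis using a_pos by (simp add: branch_len_def)
qed

lemma alpha_idx_range:
  assumes "0 \<le> u" "u < real M * a"
  shows "1 \<le> alpha_idx a u" "alpha_idx a u \<le> M"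
proof -
  show "1 \<le> alpha_idx a u" by (simp add: alpha_idx_def)
  have "u / a < real M" using assms a_pos by (simp add: field_simps)
  then have "\<lfloor>u / a\<rfloor> < int M" by (simp add: floor_less_iff)
  moreover have "0 \<le> \<lfloor>u / a\<rfloor>" using assms a_pos by simp
  ultimately have "nat \<lfloor>u / a\<rfloor> < M" by (simp add: nat_less_iff)
  then show "alpha_idx a u \<le> M" by (simp add: alpha_idx_def)
qed

lemma digit_mem: "u \<in> {0..<1} \<Longrightarrow> digit u \<in> {1..M+1}"
  using alpha_idx_range[of u] by (auto simp: digit_def)

lemma digit_le_M_iff: "digit u \<le> M \<longleftrightarrow> u < real M * a"
proof (cases "u < real M * a")
  case True
  have "alpha_idx a u \<le> M"
  proof (cases "0 \<le> u")
    case False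
    then have "\<lfloor>u / a\<rfloor> < 0" using a_pos by (simp add: divide_neg_pos floor_less_iff)
    then show ?thesis using M_ge_2 by (simp add: alpha_idx_def)
  qed (use True alpha_idx_range in blast)
  then show ?thesis using True by (simp add: digit_def)
qed (simp add: digit_def)

lemma digit_eq_1_iff: "digit u = 1 \<longleftrightarrow> u < real M * a \<and> alpha_idx a u = 1"
  using digit_le_M_iff[of u] M_ge_2 by (auto simp: digit_def)

lemma digit_eq_M_iff: "digit u = M \<longleftrightarrow> u < real M * a \<and> alpha_idx a u = M"
  using digit_le_M_iff[of u] by (auto simp: digit_def)

lemma digit_eq_top_iff: "digit u = M + 1 \<longleftrightarrow> \<not> u < real M * a"
  using digit_le_M_iff[of u] by (cases "u < real M * a") (simp_all add: digit_def)

lemma mem_branch_iff: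
  assumes k: "k \<in> {1..M+1}"
  shows "u \<in> branch k \<longleftrightarrow> u \<in> {0..<1} \<and> digit u = k"
proof (cases "k \<le> M")
  case True
  have "branch_start k = (real k - 1) * a" "branch_start k + branch_len k = real k * a"
    using True by (auto simp: branch_start_def branch_len_def algebra_simps)
  then have "u \<in> branch k \<longleftrightarrow> (real k - 1) * a \<le> u \<and> u < real k * a"
    by (simp add: branch_def)
  also have "\<dots> \<longleftrightarrow> real k - 1 \<le> u / a \<and> u / a < real k"
    using a_pos by (simp add: pos_le_divide_eq pos_divide_less_eq)
  also have "\<dots> \<longleftrightarrow> \<lfloor>u / a\<rfloor> = int k - 1"
    by (simp add: floor_eq_iff)
  also have "\<dots> \<longleftrightarrow> u \<in> {0..<1} \<and> digit u = k"
  proof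
    assume fl: "\<lfloor>u / a\<rfloor> = int k - 1"
    moreover have "1 \<le> k" using k by simp
    ultimately have "0 \<le> u / a" "u / a < real M" using True by linarith+
    then have "0 \<le> u" "u < real M * a" using a_pos by (simp_all add: field_simps zero_le_divide_iff)
    then show "u \<in> {0..<1} \<and> digit u = k"
      using fl k Ma_lt_1 by (auto simp: digit_def alpha_idx_def)
  next
    assume u: "u \<in> {0..<1} \<and> digit u = k"
    then have "u < real M * a" using True digit_le_M_iff by auto
    then show "\<lfloor>u / a\<rfloor> = int k - 1"
      using u a_pos by (auto simp: digit_def alpha_idx_def)
  qed
  finally show ?thesis .
next
  case False
  then have "k = M + 1" using k by auto
  have "branch k = {real M * a..<1}"
    using False by (simp add: branch_def branch_start_def branch_len_def)
  moreover have "0 \<le> real M * a" using a_pos by simp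
  ultimately show ?thesis
    using \<open>k = M + 1\<close> digit_eq_top_iff by auto
qed

lemma branch_inv_mem_branch: "t \<in> {0..<1} \<Longrightarrow> branch_inv k t \<in> branch k"
  using branch_len_pos[of k] by (auto simp: branch_inv_def branch_def)

lemma digit_branch_inv: "k \<in> {1..M+1} \<Longrightarrow> t \<in> {0..<1} \<Longrightarrow> digit (branch_inv k t) = k"
  using branch_inv_mem_branch mem_branch_iff by blast

lemma tau_branch_inv:
  assumes k: "k \<in> {1..M+1}" and t: "t \<in> {0..<1}"
  shows "tau M a (branch_inv k t) = t"
proof -
  have d: "digit (branch_inv k t) = k" by (rule digit_branch_inv[OF assms])
  show ?thesis
  proof (cases "k \<le> M")
    case True
    then have lt: "branch_inv k t < real M * a"
      using d digit_le_M_iff[of "branch_inv k t"] by simp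
    then have "alpha_idx a (branch_inv k t) = k" using d by (simp add: digit_def)
    then show ?thesis
      using lt True a_pos by (simp add: tau_def branch_inv_def branch_start_def branch_len_def)
  next
    case False
    then have "\<not> branch_inv k t < real M * a"
      using d digit_le_M_iff[of "branch_inv k t"] by simp
    then show ?thesis
      using False Ma_lt_1 by (simp add: tau_def branch_inv_def branch_start_def branch_len_def)
  qed
qed

lemma branch_inv_digit_tau:
  assumes "u \<in> {0..<1}"
  shows "tau M a u \<in> {0..<1}" "branch_inv (digit u) (tau M a u) = u"
proof -
  define k where "k = digit u"
  have k: "k \<in> {1..M+1}" using digit_mem[OF assms] by (simp add: k_def)
  have "u \<in> branch k" using mem_branch_iff[OF k] assms by (simp add: k_def)
  define t where "t = (u - branch_start k) / branch_len k"
  have t: "t \<in> {0..<1}" and u: "branch_inv k t = u"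
    using \<open>u \<in> branch k\<close> branch_len_pos[of k]
    by (auto simp: branch_def branch_inv_def t_def field_simps)
  then show "tau M a u \<in> {0..<1}" "branch_inv (digit u) (tau M a u) = u"
    using tau_branch_inv[OF k t] by (simp_all add: k_def)
qed

lemma indicator_unit_eq_sum_branches:
  "indicator {0..<1} u = (\<Sum>k\<in>{1..M+1}. indicator (branch k) u :: ennreal)"
proof (cases "u \<in> {0..<1}")
  case True
  have "indicator (branch k) u = (if k = digit u then 1 else 0 :: ennreal)" if "k \<in> {1..M+1}" for k
    using mem_branch_iff[OF that, of u] True by (auto simp: indicator_def)
  then have "(\<Sum>k\<in>{1..M+1}. indicator (branch k) u :: ennreal) = (\<Sum>k\<in>{1..M+1}. if k = digit u then 1 else 0)"
    by (rule sum.cong[OF refl])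
  also have "\<dots> = 1" using digit_mem[OF True] by (subst sum.delta) auto
  finally show ?thesis using True by simp
next
  case False
  then have "indicator (branch k) u = (0 :: ennreal)" if "k \<in> {1..M+1}" for k
    using mem_branch_iff[OF that, of u] False by (auto simp: indicator_def)
  then show ?thesis using False by simp
qed

lemma sum_branch_len: "(\<Sum>k\<in>{1..M+1}. ennreal (branch_len k)) = 1"
proof -
  have "(\<Sum>k\<in>{1..M+1}. ennreal (branch_len k)) = ennreal (\<Sum>k\<in>{1..M+1}. branch_len k)"
    using branch_len_pos by (intro sum_ennreal) (auto intro: less_imp_le)
  also have "(\<Sum>k\<in>{1..M+1}. branch_len k) = (\<Sum>k\<in>{1..M}. branch_len k) + branch_len (M+1)"
    by simp
  also have "\<dots> = 1" by (simp add: branch_len_def)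
  finally show ?thesis by simp
qed

lemma nn_integral_unit_branch_decomp:
  assumes [measurable]: "g \<in> borel_measurable borel"
  shows "(\<integral>\<^sup>+u. indicator {0..<1} u * g u \<partial>lborel)
    = (\<Sum>k\<in>{1..M+1}. ennreal (branch_len k) * (\<integral>\<^sup>+t. indicator {0..<1} t * g (branch_inv k t) \<partial>lborel))"
proof -
  have "(\<integral>\<^sup>+u. indicator {0..<1} u * g u \<partial>lborel)
      = (\<integral>\<^sup>+u. (\<Sum>k\<in>{1..M+1}. indicator (branch k) u * g u) \<partial>lborel)"
    by (intro nn_integral_cong) (simp only: indicator_unit_eq_sum_branches sum_distrib_right)
  also have "\<dots> = (\<Sum>k\<in>{1..M+1}. \<integral>\<^sup>+u. indicator (branch k) u * g u \<partial>lborel)"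
    by (rule nn_integral_sum) (simp add: branch_def)
  also have "\<dots> = (\<Sum>k\<in>{1..M+1}. ennreal (branch_len k) * (\<integral>\<^sup>+t. indicator {0..<1} t * g (branch_inv k t) \<partial>lborel))"
  proof (rule sum.cong[OF refl])
    fix k
    have "(\<integral>\<^sup>+u. indicator (branch k) u * g u \<partial>lborel)
        = ennreal \<bar>branch_len k\<bar> * (\<integral>\<^sup>+t. indicator (branch k) (branch_inv k t) * g (branch_inv k t) \<partial>lborel)"
      using branch_len_pos[of k] unfolding branch_inv_def
      by (intro nn_integral_real_affine) (auto simp: branch_def)
    also have "(\<lambda>t. indicator (branch k) (branch_inv k t)) = (indicator {0..<1} :: real \<Rightarrow> ennreal)"
      using branch_len_pos[of k]
      by (auto simp: branch_def branch_inv_def indicator_def fun_eq_iff zero_le_mult_iff)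
    finally show "(\<integral>\<^sup>+u. indicator (branch k) u * g u \<partial>lborel)
      = ennreal (branch_len k) * (\<integral>\<^sup>+t. indicator {0..<1} t * g (branch_inv k t) \<partial>lborel)"
      using branch_len_pos[of k] by simp
  qed
  finally show ?thesis .
qed

lemma nn_integral_tau_invariant:
  assumes [measurable]: "g \<in> borel_measurable borel"
  shows "(\<integral>\<^sup>+u. indicator {0..<1} u * g (tau M a u) \<partial>lborel) = (\<integral>\<^sup>+u. indicator {0..<1} u * g u \<partial>lborel)"
proof -
  have "(\<integral>\<^sup>+u. indicator {0..<1} u * g (tau M a u) \<partial>lborel)
      = (\<Sum>k\<in>{1..M+1}. ennreal (branch_len k) * (\<integral>\<^sup>+t. indicator {0..<1} t * g (tau M a (branch_inv k t)) \<partial>lborel))"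
    by (rule nn_integral_unit_branch_decomp) measurable
  also have "\<dots> = (\<Sum>k\<in>{1..M+1}. ennreal (branch_len k) * (\<integral>\<^sup>+t. indicator {0..<1} t * g t \<partial>lborel))"
  proof (rule sum.cong[OF refl])
    fix k assume "k \<in> {1..M+1}"
    then have "(\<integral>\<^sup>+t. indicator {0..<1} t * g (tau M a (branch_inv k t)) \<partial>lborel)
      = (\<integral>\<^sup>+t. indicator {0..<1} t * g t \<partial>lborel)"
      by (intro nn_integral_cong) (auto split: split_indicator simp: tau_branch_inv)
    then show "ennreal (branch_len k) * (\<integral>\<^sup>+t. indicator {0..<1} t * g (tau M a (branch_inv k t)) \<partial>lborel)
      = ennreal (branch_len k) * (\<integral>\<^sup>+t. indicator {0..<1} t * g t \<partial>lborel)" by simp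
  qed
  also have "\<dots> = (\<integral>\<^sup>+t. indicator {0..<1} t * g t \<partial>lborel)"
    by (simp only: sum_distrib_right[symmetric] sum_branch_len mult_1)
  finally show ?thesis .
qed

lemma nn_integral_funpow_tau_invariant:
  assumes [measurable]: "g \<in> borel_measurable borel"
  shows "(\<integral>\<^sup>+u. indicator {0..<1} u * g ((tau M a ^^ n) u) \<partial>lborel) = (\<integral>\<^sup>+u. indicator {0..<1} u * g u \<partial>lborel)"
proof (induction n)
  case (Suc n)
  have "(\<integral>\<^sup>+u. indicator {0..<1} u * g ((tau M a ^^ Suc n) u) \<partial>lborel)
     = (\<integral>\<^sup>+u. indicator {0..<1} u * (\<lambda>x. g ((tau M a ^^ n) x)) (tau M a u) \<partial>lborel)"
    by (simp add: funpow_swap1)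
  also have "\<dots> = (\<integral>\<^sup>+u. indicator {0..<1} u * g ((tau M a ^^ n) u) \<partial>lborel)"
    by (rule nn_integral_tau_invariant) measurable
  finally show ?case using Suc by simp
qed simp

section \<open>Cylinders and recurrence of digit patterns\<close>

definition in_cylinder :: "nat list \<Rightarrow> real \<Rightarrow> bool" where
  "in_cylinder w u \<longleftrightarrow> (\<forall>i<length w. digit ((tau M a ^^ i) u) = w ! i)"

lemma measurable_in_cylinder [measurable]: "Measurable.pred borel (in_cylinder w)"
  unfolding in_cylinder_def by measurable

lemma in_cylinder_Cons: "in_cylinder (k # w) u \<longleftrightarrow> digit u = k \<and> in_cylinder w (tau M a u)"
  unfolding in_cylinder_def by (simp add: All_less_Suc2 funpow_swap1)

definition cylinder_measure :: "nat list \<Rightarrow> real" where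
  "cylinder_measure w = prod_list (map branch_len w)"

lemma cylinder_measure_pos: "0 < cylinder_measure w"
  by (induction w) (auto simp: cylinder_measure_def branch_len_pos)

lemma cylinder_measure_le_1: "cylinder_measure w \<le> 1"
  by (induction w)
    (auto simp: cylinder_measure_def intro: mult_le_one branch_len_le_1 less_imp_le[OF cylinder_measure_pos[unfolded cylinder_measure_def]])

lemma cylinder_measure_mult_bounds:
  "0 < cylinder_measure w1 * cylinder_measure w2" "cylinder_measure w1 * cylinder_measure w2 \<le> 1"
  using cylinder_measure_pos cylinder_measure_le_1 by (auto intro: mult_le_one less_imp_le)

text \<open>On the cylinder of \<open>w\<close> the iterate \<open>\<tau>^|w|\<close> is affine onto \<open>[0,1)\<close> with slope
  \<open>1 / cylinder_measure w\<close>.\<close>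

lemma nn_integral_cylinder:
  assumes [measurable]: "g \<in> borel_measurable borel" and w: "set w \<subseteq> {1..M+1}"
  shows "(\<integral>\<^sup>+u. indicator {0..<1} u * (if in_cylinder w u then g ((tau M a ^^ length w) u) else 0) \<partial>lborel)
       = ennreal (cylinder_measure w) * (\<integral>\<^sup>+u. indicator {0..<1} u * g u \<partial>lborel)"
  using w
proof (induction w)
  case Nil
  then show ?case by (simp add: in_cylinder_def cylinder_measure_def)
next
  case (Cons k w)
  let ?H = "\<lambda>w u. if in_cylinder w u then g ((tau M a ^^ length w) u) else 0"
  have k: "k \<in> {1..M+1}" using Cons by auto
  have pointwise: "indicator {0..<1} t * ?H (k # w) (branch_inv j t)
      = (if j = k then indicator {0..<1} t * ?H w t else 0)" if "j \<in> {1..M+1}" for j t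
    using that
    by (auto split: split_indicator simp: in_cylinder_Cons digit_branch_inv tau_branch_inv funpow_swap1)
  have "(\<integral>\<^sup>+u. indicator {0..<1} u * ?H (k # w) u \<partial>lborel)
     = (\<Sum>j\<in>{1..M+1}. ennreal (branch_len j) * (\<integral>\<^sup>+t. indicator {0..<1} t * ?H (k # w) (branch_inv j t) \<partial>lborel))"
    by (rule nn_integral_unit_branch_decomp) measurable
  also have "\<dots> = (\<Sum>j\<in>{1..M+1}. if j = k then ennreal (branch_len k) * (\<integral>\<^sup>+t. indicator {0..<1} t * ?H w t \<partial>lborel) else 0)"
    by (intro sum.cong refl) (auto simp: pointwise)
  also have "\<dots> = ennreal (branch_len k) * (ennreal (cylinder_measure w) * (\<integral>\<^sup>+u. indicator {0..<1} u * g u \<partial>lborel))"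
    using k Cons by simp
  finally show ?case
    using branch_len_pos[of k] by (simp add: cylinder_measure_def ennreal_mult' mult.assoc)
qed

abbreviation lborel2 :: "(real \<times> real) measure" where
  "lborel2 \<equiv> lborel \<Otimes>\<^sub>M lborel"

lemma nn_integral_lborel2:
  "F \<in> borel_measurable (borel \<Otimes>\<^sub>M borel) \<Longrightarrow>
    (\<integral>\<^sup>+z. F z \<partial>lborel2) = (\<integral>\<^sup>+x. \<integral>\<^sup>+y. F (x, y) \<partial>lborel \<partial>lborel)"
  by (rule lborel.nn_integral_fst[symmetric]) simp

definition unit_square :: "real \<times> real \<Rightarrow> ennreal" where
  "unit_square z = indicator {0..<1} (fst z) * indicator {0..<1} (snd z)"

lemma borel_measurable_unit_square [measurable]: "unit_square \<in> borel_measurable (borel \<Otimes>\<^sub>M borel)"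
  unfolding unit_square_def by measurable

lemma nn_integral_unit_square: "(\<integral>\<^sup>+z. unit_square z * 1 \<partial>lborel2) = 1"
proof -
  have "(\<integral>\<^sup>+z. unit_square z * 1 \<partial>lborel2)
      = (\<integral>\<^sup>+x. \<integral>\<^sup>+y. indicator {0..<1::real} x * indicator {0..<1::real} y \<partial>lborel \<partial>lborel)"
    by (subst nn_integral_lborel2) (auto simp: unit_square_def)
  moreover have "(\<integral>\<^sup>+y. indicator {0..<1::real} x * indicator {0..<1::real} y \<partial>lborel) = indicator {0..<1} x"
    for x :: real
    by (subst nn_integral_cmult_indicator) auto
  ultimately show ?thesis by simp
qed

lemma nn_integral_unit_square_funpow_tau_invariant:
  assumes [measurable]: "\<psi> \<in> borel_measurable (borel \<Otimes>\<^sub>M borel)"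
  shows "(\<integral>\<^sup>+z. unit_square z * \<psi> ((tau M a ^^ n) (fst z), (tau M a ^^ n) (snd z)) \<partial>lborel2)
    = (\<integral>\<^sup>+z. unit_square z * \<psi> z \<partial>lborel2)"
proof -
  have "(\<integral>\<^sup>+z. unit_square z * \<psi> ((tau M a ^^ n) (fst z), (tau M a ^^ n) (snd z)) \<partial>lborel2)
      = (\<integral>\<^sup>+x. \<integral>\<^sup>+y. indicator {0..<1} x * (indicator {0..<1} y * \<psi> ((tau M a ^^ n) x, (tau M a ^^ n) y)) \<partial>lborel \<partial>lborel)"
    by (subst nn_integral_lborel2) (auto simp: unit_square_def mult.assoc)
  also have "\<dots> = (\<integral>\<^sup>+x. indicator {0..<1} x *
      (\<lambda>x'. \<integral>\<^sup>+y. indicator {0..<1} y * \<psi> (x', (tau M a ^^ n) y) \<partial>lborel) ((tau M a ^^ n) x) \<partial>lborel)"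
    by (intro nn_integral_cong nn_integral_cmult) measurable
  also have "\<dots> = (\<integral>\<^sup>+x. indicator {0..<1} x *
      (\<lambda>x'. \<integral>\<^sup>+y. indicator {0..<1} y * \<psi> (x', (tau M a ^^ n) y) \<partial>lborel) x \<partial>lborel)"
    by (rule nn_integral_funpow_tau_invariant) measurable
  also have "\<dots> = (\<integral>\<^sup>+x. indicator {0..<1} x * (\<integral>\<^sup>+y. indicator {0..<1} y * \<psi> (x, y) \<partial>lborel) \<partial>lborel)"
    by (intro nn_integral_cong arg_cong2[where f="(*)"] refl nn_integral_funpow_tau_invariant) measurable
  also have "\<dots> = (\<integral>\<^sup>+x. \<integral>\<^sup>+y. indicator {0..<1} x * (indicator {0..<1} y * \<psi> (x, y)) \<partial>lborel \<partial>lborel)"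
    by (intro nn_integral_cong nn_integral_cmult[symmetric]) measurable
  also have "\<dots> = (\<integral>\<^sup>+z. unit_square z * \<psi> z \<partial>lborel2)"
    by (subst nn_integral_lborel2) (auto simp: unit_square_def mult.assoc)
  finally show ?thesis .
qed

definition in_cylinder2 :: "nat list \<Rightarrow> nat list \<Rightarrow> real \<times> real \<Rightarrow> bool" where
  "in_cylinder2 w1 w2 z \<longleftrightarrow> in_cylinder w1 (fst z) \<and> in_cylinder w2 (snd z)"

lemma measurable_in_cylinder2 [measurable]: "Measurable.pred (borel \<Otimes>\<^sub>M borel) (in_cylinder2 w1 w2)"
  unfolding in_cylinder2_def by measurable

lemma nn_integral_cylinder2:
  assumes [measurable]: "\<psi> \<in> borel_measurable (borel \<Otimes>\<^sub>M borel)"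
    and w: "set w1 \<subseteq> {1..M+1}" "set w2 \<subseteq> {1..M+1}" "length w1 = K" "length w2 = K"
  shows "(\<integral>\<^sup>+z. unit_square z * (if in_cylinder2 w1 w2 z then \<psi> ((tau M a ^^ K) (fst z), (tau M a ^^ K) (snd z)) else 0) \<partial>lborel2)
     = ennreal (cylinder_measure w1 * cylinder_measure w2) * (\<integral>\<^sup>+z. unit_square z * \<psi> z \<partial>lborel2)"
proof -
  define q1 where "q1 = cylinder_measure w1"
  define q2 where "q2 = cylinder_measure w2"
  have q: "0 \<le> q1" "0 \<le> q2" unfolding q1_def q2_def using cylinder_measure_pos by (auto intro: less_imp_le)
  let ?I = "\<lambda>x'. \<integral>\<^sup>+y. indicator {0..<1} y * \<psi> (x', y) \<partial>lborel"
  have "(\<integral>\<^sup>+z. unit_square z * (if in_cylinder2 w1 w2 z then \<psi> ((tau M a ^^ K) (fst z), (tau M a ^^ K) (snd z)) else 0) \<partial>lborel2)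
      = (\<integral>\<^sup>+x. \<integral>\<^sup>+y. indicator {0..<1} x * (if in_cylinder w1 x then 1 else 0) *
           (indicator {0..<1} y * (if in_cylinder w2 y then \<psi> ((tau M a ^^ K) x, (tau M a ^^ K) y) else 0)) \<partial>lborel \<partial>lborel)"
    by (subst nn_integral_lborel2) (auto intro!: nn_integral_cong simp: unit_square_def in_cylinder2_def mult_ac)
  also have "\<dots> = (\<integral>\<^sup>+x. indicator {0..<1} x * (if in_cylinder w1 x then (\<lambda>x'. \<integral>\<^sup>+y. indicator {0..<1} y *
      (if in_cylinder w2 y then \<psi> (x', (tau M a ^^ K) y) else 0) \<partial>lborel) ((tau M a ^^ K) x) else 0) \<partial>lborel)"
    by (intro nn_integral_cong) (auto simp: nn_integral_cmult)
  also have "\<dots> = (\<integral>\<^sup>+x. indicator {0..<1} x * (if in_cylinder w1 x then (\<lambda>x'. ennreal q2 * ?I x') ((tau M a ^^ K) x) else 0) \<partial>lborel)"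
  proof -
    have "(\<integral>\<^sup>+y. indicator {0..<1} y * (if in_cylinder w2 y then \<psi> (x', (tau M a ^^ K) y) else 0) \<partial>lborel)
       = ennreal q2 * ?I x'" for x'
      using nn_integral_cylinder[of "\<lambda>y. \<psi> (x', y)" w2, unfolded w(4)] w unfolding q2_def by simp
    then show ?thesis by (simp only:)
  qed
  also have "\<dots> = ennreal q2 * (\<integral>\<^sup>+x. indicator {0..<1} x * (if in_cylinder w1 x then ?I ((tau M a ^^ K) x) else 0) \<partial>lborel)"
    by (subst nn_integral_cmult[symmetric]) (measurable, auto intro!: nn_integral_cong simp: mult.left_commute)
  also have "\<dots> = ennreal q2 * (ennreal q1 * (\<integral>\<^sup>+x. indicator {0..<1} x * ?I x \<partial>lborel))"
    using nn_integral_cylinder[of ?I w1, unfolded w(3)] w unfolding q1_def by simp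
  also have "(\<integral>\<^sup>+x. indicator {0..<1} x * ?I x \<partial>lborel) = (\<integral>\<^sup>+z. unit_square z * \<psi> z \<partial>lborel2)"
    by (subst nn_integral_lborel2) (auto intro!: nn_integral_cong simp: unit_square_def mult.assoc nn_integral_cmult)
  finally show ?thesis using q unfolding q1_def q2_def by (simp add: ennreal_mult mult_ac)
qed

definition block_shift :: "nat \<Rightarrow> nat \<Rightarrow> real \<times> real \<Rightarrow> real \<times> real" where
  "block_shift K j z = ((tau M a ^^ (j * K)) (fst z), (tau M a ^^ (j * K)) (snd z))"

lemma measurable_block_shift [measurable]: "block_shift K j \<in> borel \<Otimes>\<^sub>M borel \<rightarrow>\<^sub>M borel \<Otimes>\<^sub>M borel"
  unfolding block_shift_def by measurable

lemma block_shift_add: "block_shift K j (block_shift K n z) = block_shift K (j + n) z"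
  by (simp add: block_shift_def add_mult_distrib funpow_add)

definition avoids :: "nat list \<Rightarrow> nat list \<Rightarrow> nat \<Rightarrow> real \<times> real \<Rightarrow> bool" where
  "avoids w1 w2 m z \<longleftrightarrow> (\<forall>j<m. \<not> in_cylinder2 w1 w2 (block_shift (length w1) j z))"

lemma measurable_avoids [measurable]: "Measurable.pred (borel \<Otimes>\<^sub>M borel) (avoids w1 w2 m)"
  unfolding avoids_def by measurable

lemma avoids_Suc:
  "avoids w1 w2 (Suc m) z \<longleftrightarrow> \<not> in_cylinder2 w1 w2 z \<and> avoids w1 w2 m (block_shift (length w1) 1 z)"
  using block_shift_add[of "length w1" _ 1 z]
  unfolding avoids_def All_less_Suc2 by (simp add: block_shift_def)

text \<open>The cylinder property makes the first block independent of the later ones.\<close>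

lemma nn_integral_avoid_first_block:
  assumes [measurable]: "\<psi> \<in> borel_measurable (borel \<Otimes>\<^sub>M borel)"
    and w: "set w1 \<subseteq> {1..M+1}" "set w2 \<subseteq> {1..M+1}" "length w1 = K" "length w2 = K"
    and fin: "(\<integral>\<^sup>+z. unit_square z * \<psi> z \<partial>lborel2) \<noteq> \<infinity>"
  shows "(\<integral>\<^sup>+z. unit_square z * (if \<not> in_cylinder2 w1 w2 z then \<psi> (block_shift K 1 z) else 0) \<partial>lborel2)
     = ennreal (1 - cylinder_measure w1 * cylinder_measure w2) * (\<integral>\<^sup>+z. unit_square z * \<psi> z \<partial>lborel2)"
proof -
  define q where "q = cylinder_measure w1 * cylinder_measure w2"
  have q: "0 < q" "q \<le> 1" unfolding q_def by (fact cylinder_measure_mult_bounds)+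
  define I where "I = (\<integral>\<^sup>+z. unit_square z * \<psi> z \<partial>lborel2)"
  define A where "A = (\<integral>\<^sup>+z. unit_square z * (if in_cylinder2 w1 w2 z then \<psi> (block_shift K 1 z) else 0) \<partial>lborel2)"
  define B where "B = (\<integral>\<^sup>+z. unit_square z * (if \<not> in_cylinder2 w1 w2 z then \<psi> (block_shift K 1 z) else 0) \<partial>lborel2)"
  have "A = ennreal q * I" unfolding A_def I_def q_def block_shift_def mult_1
    by (rule nn_integral_cylinder2[OF assms(1) w])
  moreover have "A + B = I"
  proof -
    have "A + B = (\<integral>\<^sup>+z. unit_square z * \<psi> ((tau M a ^^ K) (fst z), (tau M a ^^ K) (snd z)) \<partial>lborel2)"
      unfolding A_def B_def
      by (subst nn_integral_add[symmetric]) (measurable, auto intro!: nn_integral_cong simp: block_shift_def)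
    also have "\<dots> = I" unfolding I_def by (rule nn_integral_unit_square_funpow_tau_invariant) measurable
    finally show ?thesis .
  qed
  ultimately have AB: "ennreal q * I + B = I" by simp
  obtain r where r: "I = ennreal r" "0 \<le> r" using fin unfolding I_def by (cases I rule: ennreal_cases) (auto simp: I_def)
  have "B = I - ennreal q * I"
    using AB r by (metis add.commute ennreal_add_diff_cancel_right ennreal_mult_eq_top_iff ennreal_neq_top)
  also have "\<dots> = ennreal ((1 - q) * r)"
    using r q by (simp add: ennreal_mult'[symmetric] ennreal_minus algebra_simps)
  finally show ?thesis using r q unfolding B_def q_def[symmetric] I_def[symmetric]
    by (simp add: ennreal_mult)
qed

lemma nn_integral_avoids:
  assumes w: "set w1 \<subseteq> {1..M+1}" "set w2 \<subseteq> {1..M+1}" "length w1 = length w2"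
  shows "(\<integral>\<^sup>+z. unit_square z * (if avoids w1 w2 m z then 1 else 0) \<partial>lborel2)
     = ennreal ((1 - cylinder_measure w1 * cylinder_measure w2) ^ m)"
proof (induction m)
  case 0
  then show ?case using nn_integral_unit_square by (simp add: avoids_def)
next
  case (Suc m)
  define q where "q = cylinder_measure w1 * cylinder_measure w2"
  have q: "0 < q" "q \<le> 1" unfolding q_def by (fact cylinder_measure_mult_bounds)+
  have "(\<integral>\<^sup>+z. unit_square z * (if avoids w1 w2 (Suc m) z then 1 else 0) \<partial>lborel2)
      = (\<integral>\<^sup>+z. unit_square z * (if \<not> in_cylinder2 w1 w2 z then
          (\<lambda>z. if avoids w1 w2 m z then 1 else 0) (block_shift (length w1) 1 z) else 0) \<partial>lborel2)"
    by (intro nn_integral_cong) (auto simp: avoids_Suc)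
  also have "\<dots> = ennreal (1 - q) * (\<integral>\<^sup>+z. unit_square z * (if avoids w1 w2 m z then 1 else 0) \<partial>lborel2)"
    unfolding q_def using Suc w by (intro nn_integral_avoid_first_block) auto
  also have "\<dots> = ennreal ((1 - q) ^ Suc m)" using Suc q unfolding q_def[symmetric]
    by (simp add: ennreal_mult)
  finally show ?case unfolding q_def .
qed

lemma nn_integral_never_in_cylinder2:
  assumes w: "set w1 \<subseteq> {1..M+1}" "set w2 \<subseteq> {1..M+1}" "length w1 = length w2"
  shows "(\<integral>\<^sup>+z. unit_square z *
    (if \<forall>j. \<not> in_cylinder2 w1 w2 (block_shift (length w1) (j + N) z) then 1 else 0) \<partial>lborel2) = 0"
proof (rule ennreal_eq_0_if_le_powers)
  fix m
  have "(\<integral>\<^sup>+z. unit_square z *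
      (if \<forall>j. \<not> in_cylinder2 w1 w2 (block_shift (length w1) (j + N) z) then 1 else 0) \<partial>lborel2)
    \<le> (\<integral>\<^sup>+z. unit_square z * (\<lambda>z. if avoids w1 w2 m z then 1 else 0)
        ((tau M a ^^ (N * length w1)) (fst z), (tau M a ^^ (N * length w1)) (snd z)) \<partial>lborel2)"
    by (intro nn_integral_mono) (auto simp: avoids_def block_shift_add[symmetric] block_shift_def[of _ N])
  also have "\<dots> = (\<integral>\<^sup>+z. unit_square z * (if avoids w1 w2 m z then 1 else 0) \<partial>lborel2)"
    by (rule nn_integral_unit_square_funpow_tau_invariant) measurable
  also have "\<dots> = ennreal ((1 - cylinder_measure w1 * cylinder_measure w2) ^ m)"
    using w by (rule nn_integral_avoids)
  finally show "(\<integral>\<^sup>+z. unit_square z *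
      (if \<forall>j. \<not> in_cylinder2 w1 w2 (block_shift (length w1) (j + N) z) then 1 else 0) \<partial>lborel2)
    \<le> ennreal ((1 - cylinder_measure w1 * cylinder_measure w2) ^ m)" .
qed (use cylinder_measure_mult_bounds in auto)

lemma AE_in_cylinder2_frequently:
  assumes w: "set w1 \<subseteq> {1..M+1}" "set w2 \<subseteq> {1..M+1}" "length w1 = length w2"
  shows "AE z in lborel2. unit_square z \<noteq> 0 \<longrightarrow>
    (\<exists>\<^sub>F j in sequentially. in_cylinder2 w1 w2 (block_shift (length w1) j z))"
proof -
  let ?miss = "\<lambda>N z. \<forall>j. \<not> in_cylinder2 w1 w2 (block_shift (length w1) (j + N) z)"
  have "AE z in lborel2. unit_square z * (if ?miss N z then 1 else 0) = 0" for N
    using nn_integral_never_in_cylinder2[OF w, of N] by (subst (asm) nn_integral_0_iff_AE) measurable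
  then have "AE z in lborel2. \<forall>N. unit_square z * (if ?miss N z then 1 else 0) = 0"
    by (subst AE_all_countable) auto
  then show ?thesis
  proof (rule eventually_mono, intro impI)
    fix z assume miss: "\<forall>N. unit_square z * (if ?miss N z then 1 else 0) = 0"
      and nz: "unit_square z \<noteq> 0"
    show "\<exists>\<^sub>F j in sequentially. in_cylinder2 w1 w2 (block_shift (length w1) j z)"
      unfolding frequently_sequentially
    proof
      fix N
      from miss nz have "\<not> ?miss N z" by (auto split: if_splits)
      then obtain j where "in_cylinder2 w1 w2 (block_shift (length w1) (j + N) z)" by blast
      then show "\<exists>n\<ge>N. in_cylinder2 w1 w2 (block_shift (length w1) n z)"
        by (intro exI[of _ "j + N"]) auto
    qed
  qed
qed

section \<open>The fibre coordinates\<close>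

definition b_a :: real where
  "b_a = 1 / real M - a"

lemma b_a_pos: "0 < b_a"
  using a_lt by (simp add: b_a_def)

lemma one_minus_M_b_a: "1 - real M * b_a = real M * a"
  using M_pos by (simp add: b_a_def field_simps)

lemma b_a_lt_1: "b_a < 1"
proof -
  have "1 / real M \<le> 1" using M_ge_2 by simp
  then show ?thesis using a_pos by (simp add: b_a_def)
qed

definition xc_step :: "real \<Rightarrow> real \<Rightarrow> real" where
  "xc_step u c = (if u < real M * a then c / real M + (real (alpha_idx a u) - 1) / real M
     else real M * c - real (beta_idx M c) + 1)"

definition xs_step :: "real \<Rightarrow> real \<Rightarrow> real \<Rightarrow> real" where
  "xs_step u c s = (if u < real M * a then (1 - real M * b_a) * s
     else b_a * s + 1 + b_a * (real (beta_idx M c) - real M - 1))"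

lemma f2_eq: "f2 M a z = (tau M a (fst z), xc_step (fst z) (snd z))"
  by (cases z) (simp add: f2_def xc_step_def)

lemma f3_eq:
  "f3 M a b_a x = (tau M a (fst x), xc_step (fst x) (fst (snd x)), xs_step (fst x) (fst (snd x)) (snd (snd x)))"
  by (cases x) (simp add: f3_def f2_def xc_step_def xs_step_def)

lemma fst_funpow_f3: "fst ((f3 M a b_a ^^ n) x) = (tau M a ^^ n) (fst x)"
  by (induction n) (simp_all add: f3_eq)

lemma funpow_f2_eq_funpow_f3:
  "(f2 M a ^^ n) (u, c) = (fst ((f3 M a b_a ^^ n) (u, c, s)), fst (snd ((f3 M a b_a ^^ n) (u, c, s))))"
  by (induction n) (simp_all add: f2_eq f3_eq)

lemma beta_idx_range: "0 \<le> c \<Longrightarrow> c \<le> 1 \<Longrightarrow> 1 \<le> beta_idx M c \<and> beta_idx M c \<le> M"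
  using M_ge_2 by (auto simp: beta_idx_def)

lemma xc_step_range:
  assumes "u \<in> {0..<1}" "0 \<le> c" "c \<le> 1"
  shows "0 \<le> xc_step u c \<and> xc_step u c \<le> 1"
proof (cases "u < real M * a")
  case True
  have k: "1 \<le> alpha_idx a u" "alpha_idx a u \<le> M" using alpha_idx_range True assms by auto
  have "xc_step u c = (c + real (alpha_idx a u) - 1) / real M"
    using True M_pos by (simp add: xc_step_def field_simps)
  moreover have "0 \<le> (c + real (alpha_idx a u) - 1) / real M" using k assms M_pos by simp
  moreover have "(c + real (alpha_idx a u) - 1) / real M \<le> 1" using k assms M_pos
    by (simp add: divide_le_eq_1)
  ultimately show ?thesis by simp
next
  case False
  show ?thesis
  proof (cases "c < 1")
    case True
    have "real M * c < real M" using True M_pos by simp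
    then have "\<lfloor>real M * c\<rfloor> < int M" by (simp add: floor_less_iff)
    moreover have fl0: "0 \<le> \<lfloor>real M * c\<rfloor>" using assms by simp
    ultimately have "nat \<lfloor>real M * c\<rfloor> < M" by (simp add: nat_less_iff)
    then have "real (beta_idx M c) = real_of_int \<lfloor>real M * c\<rfloor> + 1"
      using fl0 by (simp add: beta_idx_def)
    moreover have "real_of_int \<lfloor>real M * c\<rfloor> \<le> real M * c" "real M * c < real_of_int \<lfloor>real M * c\<rfloor> + 1"
      by linarith+
    moreover have "xc_step u c = real M * c - real (beta_idx M c) + 1" using False by (simp add: xc_step_def)
    ultimately show ?thesis by linarith
  next
    case False
    then have "c = 1" using assms by simp
    then show ?thesis using \<open>\<not> u < real M * a\<close> by (simp add: xc_step_def beta_idx_def)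
  qed
qed

lemma xs_step_range:
  assumes "u \<in> {0..<1}" "0 \<le> c" "c \<le> 1" "0 \<le> s" "s \<le> 1"
  shows "0 \<le> xs_step u c s \<and> xs_step u c s \<le> 1"
proof (cases "u < real M * a")
  case True
  have "0 \<le> real M * a" "real M * a \<le> 1" using a_pos Ma_lt_1 by auto
  then show ?thesis using True assms one_minus_M_b_a by (simp add: xs_step_def mult_le_one)
next
  case False
  have k: "1 \<le> beta_idx M c" "beta_idx M c \<le> M" using beta_idx_range assms by auto
  have "b_a * s \<le> b_a" "0 \<le> b_a * s" using b_a_pos assms by (simp_all add: mult_left_le)
  moreover have "b_a * (real (beta_idx M c) - real M - 1) \<le> b_a * (-1)"
    using k b_a_pos by (intro mult_left_mono) auto
  moreover have "b_a * (- real M) \<le> b_a * (real (beta_idx M c) - real M - 1)"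
    using k b_a_pos by (intro mult_left_mono) auto
  moreover have "0 \<le> 1 - b_a * real M" using one_minus_M_b_a a_pos by (simp add: mult.commute)
  ultimately show ?thesis using False by (simp add: xs_step_def)
qed

lemma f3_maps_cube:
  assumes "x \<in> {0..<1} \<times> {0..1} \<times> {0..1}"
  shows "f3 M a b_a x \<in> {0..<1} \<times> {0..1} \<times> {0..1}"
  using assms branch_inv_digit_tau(1) xc_step_range xs_step_range by (auto simp: f3_eq)

lemma funpow_f3_maps_cube:
  "x \<in> {0..<1} \<times> {0..1} \<times> {0..1} \<Longrightarrow> (f3 M a b_a ^^ n) x \<in> {0..<1} \<times> {0..1} \<times> {0..1}"
  by (induction n) (simp_all add: f3_maps_cube del: mem_Sigma_iff)

lemma beta_idx_eq_M: assumes "1 - c \<le> 1 / real M" "c \<le> 1" shows "beta_idx M c = M"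
proof -
  have "real M * (1 - c) \<le> 1" using assms M_pos by (simp add: field_simps)
  then have "int M - 1 \<le> \<lfloor>real M * c\<rfloor>" by (simp add: le_floor_iff algebra_simps)
  then show ?thesis by (simp add: beta_idx_def)
qed


definition orbit3 :: "real \<times> real \<times> real \<Rightarrow> nat \<Rightarrow> real \<times> real \<times> real" where
  "orbit3 x n = (f3 M a b_a ^^ n) x"

context
  fixes x :: "real \<times> real \<times> real"
  assumes x: "x \<in> {0..<1} \<times> {0..1} \<times> {0..1}"
begin

abbreviation "xu n \<equiv> fst (orbit3 x n)"
abbreviation "xc n \<equiv> fst (snd (orbit3 x n))"
abbreviation "xs n \<equiv> snd (snd (orbit3 x n))"

lemma orbit_range: "xu n \<in> {0..<1}" "0 \<le> xc n" "xc n \<le> 1" "0 \<le> xs n" "xs n \<le> 1"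
  using funpow_f3_maps_cube[OF x, of n] by (auto simp: orbit3_def)

lemma orbit_Suc:
  "xu (Suc n) = tau M a (xu n)" "xc (Suc n) = xc_step (xu n) (xc n)" "xs (Suc n) = xs_step (xu n) (xc n) (xs n)"
  by (simp_all add: orbit3_def f3_eq)

lemma xc_xs_le_after_digits_1:
  "(\<forall>i<L. digit (xu (t + i)) = 1) \<Longrightarrow> xc (t + L) \<le> (1 / real M) ^ L \<and> xs (t + L) \<le> (real M * a) ^ L"
proof (induction L)
  case 0
  then show ?case using orbit_range by simp
next
  case (Suc L)
  then have IH: "xc (t + L) \<le> (1 / real M) ^ L" "xs (t + L) \<le> (real M * a) ^ L" by auto
  have "xu (t + L) < real M * a" "alpha_idx a (xu (t + L)) = 1"
    using Suc.prems digit_eq_1_iff by auto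
  then have "xc (Suc (t + L)) = xc (t + L) / real M" "xs (Suc (t + L)) = real M * a * xs (t + L)"
    unfolding orbit_Suc using one_minus_M_b_a by (simp_all add: xc_step_def xs_step_def)
  moreover have "xc (t + L) / real M \<le> (1 / real M) ^ L / real M"
    using IH M_pos by (simp add: divide_right_mono)
  moreover have "real M * a * xs (t + L) \<le> real M * a * (real M * a) ^ L"
    using IH a_pos by (simp add: mult_left_mono)
  ultimately show ?case by (simp add: power_Suc2 field_simps)
qed

lemma one_minus_xc_le_after_digits_M:
  "(\<forall>i<L. digit (xu (t + i)) = M) \<Longrightarrow> 1 - xc (t + L) \<le> (1 / real M) ^ L"
proof (induction L)
  case 0
  then show ?case using orbit_range by simp
next
  case (Suc L)
  then have IH: "1 - xc (t + L) \<le> (1 / real M) ^ L" by auto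
  have "xu (t + L) < real M * a" "alpha_idx a (xu (t + L)) = M"
    using Suc.prems digit_eq_M_iff by auto
  then have "1 - xc (Suc (t + L)) = (1 - xc (t + L)) / real M"
    unfolding orbit_Suc using M_pos by (simp add: xc_step_def field_simps)
  moreover have "(1 - xc (t + L)) / real M \<le> (1 / real M) ^ L / real M"
    using IH M_pos by (simp add: divide_right_mono)
  ultimately show ?case by (simp add: power_Suc2 field_simps)
qed

text \<open>The hypothesis keeps \<open>x\<^sub>c\<close> within \<open>1/M\<close> of \<open>1\<close> for \<open>L\<close> steps, so \<open>beta_idx\<close> stays \<open>M\<close>
  and \<open>1 - x\<^sub>c\<close> grows by exactly the factor \<open>M\<close> per step.\<close>

lemma one_minus_xc_xs_le_after_digits_top:
  assumes "1 - xc t \<le> (1 / real M) ^ (2 * L)"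
  shows "J \<le> L \<Longrightarrow> (\<forall>i<J. digit (xu (t + i)) = M + 1) \<Longrightarrow>
    1 - xc (t + J) \<le> (1 / real M) ^ (2 * L - J) \<and> 1 - xs (t + J) \<le> b_a ^ J"
proof (induction J)
  case 0
  then show ?case using orbit_range assms by simp
next
  case (Suc J)
  then have IH: "1 - xc (t + J) \<le> (1 / real M) ^ (2 * L - J)" "1 - xs (t + J) \<le> b_a ^ J" by auto
  have top: "\<not> xu (t + J) < real M * a"
    using Suc.prems digit_eq_top_iff by auto
  have "(1 / real M) ^ (2 * L - J) \<le> (1 / real M) ^ 1"
    using Suc.prems M_ge_2 by (intro power_decreasing) auto
  then have "beta_idx M (xc (t + J)) = M" using IH orbit_range by (intro beta_idx_eq_M) auto
  then have "1 - xc (Suc (t + J)) = real M * (1 - xc (t + J))" "1 - xs (Suc (t + J)) = b_a * (1 - xs (t + J))"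
    unfolding orbit_Suc using top by (simp_all add: xc_step_def xs_step_def algebra_simps)
  moreover have "real M * (1 - xc (t + J)) \<le> real M * (1 / real M) ^ (2 * L - J)"
    using IH M_pos by simp
  moreover have "real M * (1 / real M) ^ (2 * L - J) = (1 / real M) ^ (2 * L - Suc J)"
  proof -
    have "2 * L - J = Suc (2 * L - Suc J)" using Suc.prems by simp
    then show ?thesis using M_pos by (simp add: field_simps)
  qed
  moreover have "b_a * (1 - xs (t + J)) \<le> b_a * b_a ^ J" using IH b_a_pos by (simp add: mult_left_mono)
  ultimately show ?case by simp
qed

text \<open>Since \<open>\<tau>\<close> expands, \<open>x\<^sub>u\<close> is controlled by the digits still to come.\<close>

lemma xu_le_before_digits_1:
  "(\<forall>i<L. digit (xu (n + i)) = 1) \<Longrightarrow> xu n \<le> a ^ L"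
proof (induction L arbitrary: n)
  case 0
  then show ?case using orbit_range by (simp add: less_imp_le)
next
  case (Suc L)
  have "\<forall>i<L. digit (xu (Suc n + i)) = 1" using Suc.prems by auto
  then have IH: "xu (Suc n) \<le> a ^ L" using Suc.IH by blast
  have "digit (xu n) = 1" using Suc.prems by auto
  then have "xu n = a * xu (Suc n)"
    using branch_inv_digit_tau(2)[OF orbit_range(1)[of n]] M_ge_2 unfolding orbit_Suc
    by (simp add: branch_inv_def branch_start_def branch_len_def)
  then show ?case using IH a_pos by (simp add: mult_left_mono)
qed

lemma one_minus_xu_le_before_digits_top:
  "(\<forall>i<L. digit (xu (n + i)) = M + 1) \<Longrightarrow> 1 - xu n \<le> (1 - real M * a) ^ L"
proof (induction L arbitrary: n)
  case 0
  then show ?case using orbit_range by simp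
next
  case (Suc L)
  have "\<forall>i<L. digit (xu (Suc n + i)) = M + 1" using Suc.prems by auto
  then have IH: "1 - xu (Suc n) \<le> (1 - real M * a) ^ L" using Suc.IH by blast
  have "digit (xu n) = M + 1" using Suc.prems by auto
  then have "xu n = real M * a + (1 - real M * a) * xu (Suc n)"
    using branch_inv_digit_tau(2)[OF orbit_range(1)[of n]] unfolding orbit_Suc
    by (simp add: branch_inv_def branch_start_def branch_len_def)
  then have "1 - xu n = (1 - real M * a) * (1 - xu (Suc n))" by (simp add: algebra_simps)
  then show ?case using IH Ma_lt_1 by (simp add: mult_left_mono)
qed

lemma digit_orbit_if_in_cylinder:
  assumes "in_cylinder w ((tau M a ^^ t) (fst x))" "i < length w"
  shows "digit (xu (t + i)) = w ! i"
proof -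
  have "xu (t + i) = (tau M a ^^ i) ((tau M a ^^ t) (fst x))"
    by (simp add: orbit3_def fst_funpow_f3 funpow_add add.commute)
  then show ?thesis using assms by (simp add: in_cylinder_def)
qed

end

text \<open>Inside a block the orbit is inspected at position \<open>3 L\<close>: the digits before it drive
  \<open>x\<^sub>c\<close> and \<open>x\<^sub>s\<close>, the \<open>L\<close> digits after it pin down \<open>x\<^sub>u\<close>.\<close>

definition origin_word :: "nat \<Rightarrow> nat list" where
  "origin_word L = replicate (4 * L) 1"

definition top_word :: "nat \<Rightarrow> nat list" where
  "top_word L = replicate (2 * L) M @ replicate (2 * L) (M + 1)"

lemma length_origin_word [simp]: "length (origin_word L) = 4 * L"
  by (simp add: origin_word_def)

lemma length_top_word [simp]: "length (top_word L) = 4 * L"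
  by (simp add: top_word_def)

lemma set_origin_word: "set (origin_word L) \<subseteq> {1..M+1}"
  by (auto simp: origin_word_def)

lemma set_top_word: "set (top_word L) \<subseteq> {1..M+1}"
  using M_ge_2 by (auto simp: top_word_def)

definition rho :: real where
  "rho = max (max a (1 / real M)) (max (max (real M * a) b_a) (1 - real M * a))"

lemma rho_bounds:
  "0 \<le> rho" "rho < 1" "a \<le> rho" "1 / real M \<le> rho" "real M * a \<le> rho" "b_a \<le> rho" "1 - real M * a \<le> rho"
proof -
  have "1 / real M < 1" using M_ge_2 by simp
  then show "0 \<le> rho" "rho < 1" "a \<le> rho" "1 / real M \<le> rho" "real M * a \<le> rho" "b_a \<le> rho" "1 - real M * a \<le> rho"
    using a_pos a_lt M_pos Ma_lt_1 b_a_lt_1 by (auto simp: rho_def)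
qed

lemma exists_rho_power_le: "0 < e \<Longrightarrow> \<exists>L\<ge>1. rho ^ L \<le> e"
proof -
  assume "0 < e"
  then obtain L where "rho ^ L < e" using real_arch_pow_inv rho_bounds(2) by blast
  moreover have "rho ^ Suc L \<le> rho ^ L" using rho_bounds by (intro power_decreasing) auto
  ultimately show ?thesis by (intro exI[of _ "Suc L"]) auto
qed

lemma orbit3_near_origin:
  assumes x: "x \<in> {0..<1} \<times> {0..1} \<times> {0..1}"
    and w: "in_cylinder (origin_word L) ((tau M a ^^ t) (fst x))"
  shows "orbit3 x (t + 3 * L) \<in> {0..rho ^ L} \<times> {0..rho ^ L} \<times> {0..rho ^ L}"
proof -
  have d: "digit (xu x (t + i)) = 1" if "i < 4 * L" for i
    using digit_orbit_if_in_cylinder[OF x w, of i] that by (simp add: origin_word_def)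
  have e: "t + 2 * L + L = t + 3 * L" by simp
  have "xc x (t + 2 * L + L) \<le> (1 / real M) ^ L \<and> xs x (t + 2 * L + L) \<le> (real M * a) ^ L"
    using d[of "2 * L + _"] by (intro xc_xs_le_after_digits_1[OF x]) (simp add: add.assoc)
  then have "xc x (t + 3 * L) \<le> (1 / real M) ^ L \<and> xs x (t + 3 * L) \<le> (real M * a) ^ L"
    unfolding e .
  moreover have "xu x (t + 3 * L) \<le> a ^ L"
    using d[of "3 * L + _"] by (intro xu_le_before_digits_1[OF x]) (simp add: add.assoc)
  moreover have "a ^ L \<le> rho ^ L" "(1 / real M) ^ L \<le> rho ^ L" "(real M * a) ^ L \<le> rho ^ L"
    using rho_bounds a_pos M_pos by (auto intro: power_mono)
  ultimately show ?thesis using orbit_range[OF x, of "t + 3 * L"]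
    unfolding mem_Times_iff atLeastAtMost_iff atLeastLessThan_iff by (intro conjI; linarith)
qed

lemma orbit3_near_top:
  assumes x: "x \<in> {0..<1} \<times> {0..1} \<times> {0..1}" and L: "1 \<le> L"
    and w: "in_cylinder (top_word L) ((tau M a ^^ t) (fst x))"
  shows "orbit3 x (t + 3 * L) \<in> {1 - rho ^ L..1} \<times> {1 - rho ^ L..1} \<times> {1 - rho ^ L..1}"
proof -
  have dM: "digit (xu x (t + i)) = M" if "i < 2 * L" for i
    using digit_orbit_if_in_cylinder[OF x w, of i] that by (simp add: top_word_def nth_append)
  have dT: "digit (xu x (t + 2 * L + i)) = M + 1" if "i < 2 * L" for i
    using digit_orbit_if_in_cylinder[OF x w, of "2 * L + i"] that by (simp add: top_word_def nth_append add.assoc)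
  have "1 - xc x (t + 2 * L) \<le> (1 / real M) ^ (2 * L)"
    using dM by (intro one_minus_xc_le_after_digits_M[OF x]) auto
  then have "1 - xc x (t + 2 * L + L) \<le> (1 / real M) ^ (2 * L - L) \<and> 1 - xs x (t + 2 * L + L) \<le> b_a ^ L"
    using dT by (intro one_minus_xc_xs_le_after_digits_top[OF x]) auto
  moreover have "t + 2 * L + L = t + 3 * L" "2 * L - L = L" by simp_all
  ultimately have "1 - xc x (t + 3 * L) \<le> (1 / real M) ^ L \<and> 1 - xs x (t + 3 * L) \<le> b_a ^ L"
    by simp
  moreover have "1 - xu x (t + 3 * L) \<le> (1 - real M * a) ^ L"
    using dT[of "L + _"] by (intro one_minus_xu_le_before_digits_top[OF x]) (simp add: add.assoc)
  moreover have "(1 - real M * a) ^ L \<le> rho ^ L" "(1 / real M) ^ L \<le> rho ^ L" "b_a ^ L \<le> rho ^ L"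
    using rho_bounds Ma_lt_1 M_pos b_a_pos by (auto intro: power_mono)
  ultimately show ?thesis using orbit_range[OF x, of "t + 3 * L"]
    unfolding mem_Times_iff atLeastAtMost_iff atLeastLessThan_iff by (intro conjI; linarith)
qed

definition recurrent :: "real \<times> real \<Rightarrow> bool" where
  "recurrent z \<longleftrightarrow>
    (\<forall>L\<ge>1. \<exists>\<^sub>F j in sequentially. in_cylinder2 (origin_word L) (origin_word L) (block_shift (4 * L) j z)) \<and>
    (\<forall>L\<ge>1. \<exists>\<^sub>F j in sequentially. in_cylinder2 (origin_word L) (top_word L) (block_shift (4 * L) j z))"

lemma measurable_recurrent [measurable]: "Measurable.pred (borel \<Otimes>\<^sub>M borel) recurrent"
  unfolding recurrent_def frequently_sequentially by measurable

lemma AE_recurrent: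
  "AE z in lborel2. fst z \<in> {0..1} \<and> snd z \<in> {0..1} \<longrightarrow> fst z \<in> {0..<1} \<and> snd z \<in> {0..<1} \<and> recurrent z"
proof -
  have "AE z in lborel2. \<forall>L. 1 \<le> L \<longrightarrow> unit_square z \<noteq> 0 \<longrightarrow>
      (\<exists>\<^sub>F j in sequentially. in_cylinder2 (origin_word L) (origin_word L) (block_shift (4 * L) j z))"
    unfolding AE_all_countable
    using AE_in_cylinder2_frequently[OF set_origin_word set_origin_word] by simp
  moreover have "AE z in lborel2. \<forall>L. 1 \<le> L \<longrightarrow> unit_square z \<noteq> 0 \<longrightarrow>
      (\<exists>\<^sub>F j in sequentially. in_cylinder2 (origin_word L) (top_word L) (block_shift (4 * L) j z))"
    unfolding AE_all_countable
    using AE_in_cylinder2_frequently[OF set_origin_word set_top_word] by simp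
  moreover have "{1} \<times> UNIV \<union> UNIV \<times> {1} \<in> null_sets lborel2"
    by (intro null_sets.Un lborel.times_in_null_sets1 lborel.times_in_null_sets2) auto
  then have "AE z in lborel2. fst z \<noteq> 1 \<and> snd z \<noteq> 1"
    by (rule AE_I') auto
  ultimately show ?thesis
    by eventually_elim (auto simp: recurrent_def unit_square_def)
qed

lemma frequently_orbit3_near_origin:
  assumes "recurrent (fst x, fst y)" "0 < e"
    and x: "x \<in> {0..<1} \<times> {0..1} \<times> {0..1}" and y: "y \<in> {0..<1} \<times> {0..1} \<times> {0..1}"
  shows "\<exists>\<^sub>F n in sequentially. orbit3 x n \<in> {0..e} \<times> {0..e} \<times> {0..e} \<and> orbit3 y n \<in> {0..e} \<times> {0..e} \<times> {0..e}"
  unfolding frequently_sequentially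
proof
  fix N
  obtain L where L: "1 \<le> L" "rho ^ L \<le> e" using exists_rho_power_le[OF \<open>0 < e\<close>] by blast
  then obtain j where j: "N \<le> j" "in_cylinder2 (origin_word L) (origin_word L) (block_shift (4 * L) j (fst x, fst y))"
    using assms(1) unfolding recurrent_def frequently_sequentially by blast
  then have cx: "in_cylinder (origin_word L) ((tau M a ^^ (j * (4 * L))) (fst x))"
    and cy: "in_cylinder (origin_word L) ((tau M a ^^ (j * (4 * L))) (fst y))"
    by (simp_all add: in_cylinder2_def block_shift_def)
  have "orbit3 x (j * (4 * L) + 3 * L) \<in> {0..rho ^ L} \<times> {0..rho ^ L} \<times> {0..rho ^ L}"
    by (rule orbit3_near_origin[OF x cx])
  moreover have "orbit3 y (j * (4 * L) + 3 * L) \<in> {0..rho ^ L} \<times> {0..rho ^ L} \<times> {0..rho ^ L}"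
    by (rule orbit3_near_origin[OF y cy])
  moreover have "j \<le> j * (4 * L)" using L(1) by simp
  then have "N \<le> j * (4 * L) + 3 * L" using j(1) by linarith
  ultimately show "\<exists>n\<ge>N. orbit3 x n \<in> {0..e} \<times> {0..e} \<times> {0..e} \<and> orbit3 y n \<in> {0..e} \<times> {0..e} \<times> {0..e}"
    using L(2) by (intro exI[of _ "j * (4 * L) + 3 * L"]) auto
qed

lemma frequently_orbit3_at_opposite_corners:
  assumes "recurrent (fst x, fst y)" "0 < e"
    and x: "x \<in> {0..<1} \<times> {0..1} \<times> {0..1}" and y: "y \<in> {0..<1} \<times> {0..1} \<times> {0..1}"
  shows "\<exists>\<^sub>F n in sequentially.
    orbit3 x n \<in> {0..e} \<times> {0..e} \<times> {0..e} \<and> orbit3 y n \<in> {1 - e..1} \<times> {1 - e..1} \<times> {1 - e..1}"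
  unfolding frequently_sequentially
proof
  fix N
  obtain L where L: "1 \<le> L" "rho ^ L \<le> e" using exists_rho_power_le[OF \<open>0 < e\<close>] by blast
  then obtain j where j: "N \<le> j" "in_cylinder2 (origin_word L) (top_word L) (block_shift (4 * L) j (fst x, fst y))"
    using assms(1) unfolding recurrent_def frequently_sequentially by blast
  then have cx: "in_cylinder (origin_word L) ((tau M a ^^ (j * (4 * L))) (fst x))"
    and cy: "in_cylinder (top_word L) ((tau M a ^^ (j * (4 * L))) (fst y))"
    by (simp_all add: in_cylinder2_def block_shift_def)
  have "orbit3 x (j * (4 * L) + 3 * L) \<in> {0..rho ^ L} \<times> {0..rho ^ L} \<times> {0..rho ^ L}"
    by (rule orbit3_near_origin[OF x cx])
  moreover have "orbit3 y (j * (4 * L) + 3 * L) \<in> {1 - rho ^ L..1} \<times> {1 - rho ^ L..1} \<times> {1 - rho ^ L..1}"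
    by (rule orbit3_near_top[OF y L(1) cy])
  moreover have "j \<le> j * (4 * L)" using L(1) by simp
  then have "N \<le> j * (4 * L) + 3 * L" using j(1) by linarith
  ultimately show "\<exists>n\<ge>N. orbit3 x n \<in> {0..e} \<times> {0..e} \<times> {0..e} \<and>
      orbit3 y n \<in> {1 - e..1} \<times> {1 - e..1} \<times> {1 - e..1}"
    using L(2) by (intro exI[of _ "j * (4 * L) + 3 * L"]) auto
qed

lemma Li_Yorke_f3:
  assumes "recurrent (fst x, fst y)"
    and x: "x \<in> {0..<1} \<times> {0..1} \<times> {0..1}" and y: "y \<in> {0..<1} \<times> {0..1} \<times> {0..1}"
  shows "liminf (\<lambda>n. ereal (dist ((f3 M a b_a ^^ n) x) ((f3 M a b_a ^^ n) y))) = 0 \<and>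
    limsup (\<lambda>n. ereal (dist ((f3 M a b_a ^^ n) x) ((f3 M a b_a ^^ n) y))) = ereal (sqrt 3)"
proof -
  have "liminf (\<lambda>n. ereal (dist (orbit3 x n) (orbit3 y n))) = 0 \<and>
      limsup (\<lambda>n. ereal (dist (orbit3 x n) (orbit3 y n))) = ereal (sqrt DIM(real \<times> real \<times> real))"
  proof (rule Li_Yorke_in_unit_cube)
    show "orbit3 x n \<in> cbox 0 One" "orbit3 y n \<in> cbox 0 One" for n
      using funpow_f3_maps_cube[OF x, of n] funpow_f3_maps_cube[OF y, of n]
      by (auto simp: orbit3_def cbox_prod_simps)
    show "\<exists>\<^sub>F n in sequentially. orbit3 x n \<in> cbox 0 (e *\<^sub>R One) \<and> orbit3 y n \<in> cbox 0 (e *\<^sub>R One)"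
      if "0 < e" for e
      using frequently_orbit3_near_origin[OF assms(1) that x y] by (simp add: cbox_prod_simps)
    show "\<exists>\<^sub>F n in sequentially. orbit3 x n \<in> cbox 0 (e *\<^sub>R One) \<and> orbit3 y n \<in> cbox ((1 - e) *\<^sub>R One) One"
      if "0 < e" for e
      using frequently_orbit3_at_opposite_corners[OF assms(1) that x y] by (simp add: cbox_prod_simps)
  qed
  then show ?thesis by (simp add: orbit3_def)
qed

lemma Li_Yorke_f2:
  assumes "recurrent (fst x, fst y)"
    and x: "x \<in> {0..<1} \<times> {0..1}" and y: "y \<in> {0..<1} \<times> {0..1}"
  shows "liminf (\<lambda>n. ereal (dist ((f2 M a ^^ n) x) ((f2 M a ^^ n) y))) = 0 \<and>
    limsup (\<lambda>n. ereal (dist ((f2 M a ^^ n) x) ((f2 M a ^^ n) y))) = ereal (sqrt 2)"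
proof -
  define x3 where "x3 = (fst x, snd x, 0::real)"
  define y3 where "y3 = (fst y, snd y, 0::real)"
  have x3: "x3 \<in> {0..<1} \<times> {0..1} \<times> {0..1}" and y3: "y3 \<in> {0..<1} \<times> {0..1} \<times> {0..1}"
    and rec: "recurrent (fst x3, fst y3)"
    using x y assms(1) by (auto simp: x3_def y3_def)
  have proj_x: "(f2 M a ^^ n) x \<in> A \<times> B" if "orbit3 x3 n \<in> A \<times> B \<times> C" for n A B C
    using that funpow_f2_eq_funpow_f3[of n "fst x" "snd x" 0] by (auto simp: orbit3_def x3_def)
  have proj_y: "(f2 M a ^^ n) y \<in> A \<times> B" if "orbit3 y3 n \<in> A \<times> B \<times> C" for n A B C
    using that funpow_f2_eq_funpow_f3[of n "fst y" "snd y" 0] by (auto simp: orbit3_def y3_def)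
  have "liminf (\<lambda>n. ereal (dist ((f2 M a ^^ n) x) ((f2 M a ^^ n) y))) = 0 \<and>
      limsup (\<lambda>n. ereal (dist ((f2 M a ^^ n) x) ((f2 M a ^^ n) y))) = ereal (sqrt DIM(real \<times> real))"
  proof (rule Li_Yorke_in_unit_cube)
    show "(f2 M a ^^ n) x \<in> cbox 0 One" "(f2 M a ^^ n) y \<in> cbox 0 One" for n
      using proj_x[of n "{0..1}" "{0..1}" "{0..1}"] proj_y[of n "{0..1}" "{0..1}" "{0..1}"]
        funpow_f3_maps_cube[OF x3, of n] funpow_f3_maps_cube[OF y3, of n]
      by (auto simp: orbit3_def cbox_prod_simps)
    show "\<exists>\<^sub>F n in sequentially. (f2 M a ^^ n) x \<in> cbox 0 (e *\<^sub>R One) \<and> (f2 M a ^^ n) y \<in> cbox 0 (e *\<^sub>R One)"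
      if "0 < e" for e
    proof (rule frequently_elim1[OF frequently_orbit3_near_origin[OF rec that x3 y3]])
      fix n assume H: "orbit3 x3 n \<in> {0..e} \<times> {0..e} \<times> {0..e} \<and> orbit3 y3 n \<in> {0..e} \<times> {0..e} \<times> {0..e}"
      have "(f2 M a ^^ n) x \<in> {0..e} \<times> {0..e}" "(f2 M a ^^ n) y \<in> {0..e} \<times> {0..e}"
        by (rule proj_x[OF conjunct1[OF H]], rule proj_y[OF conjunct2[OF H]])
      then show "(f2 M a ^^ n) x \<in> cbox 0 (e *\<^sub>R One) \<and> (f2 M a ^^ n) y \<in> cbox 0 (e *\<^sub>R One)"
        by (simp add: cbox_prod_simps)
    qed
    show "\<exists>\<^sub>F n in sequentially. (f2 M a ^^ n) x \<in> cbox 0 (e *\<^sub>R One) \<and> (f2 M a ^^ n) y \<in> cbox ((1 - e) *\<^sub>R One) One"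
      if "0 < e" for e
    proof (rule frequently_elim1[OF frequently_orbit3_at_opposite_corners[OF rec that x3 y3]])
      fix n assume H: "orbit3 x3 n \<in> {0..e} \<times> {0..e} \<times> {0..e} \<and>
        orbit3 y3 n \<in> {1 - e..1} \<times> {1 - e..1} \<times> {1 - e..1}"
      have "(f2 M a ^^ n) x \<in> {0..e} \<times> {0..e}" "(f2 M a ^^ n) y \<in> {1 - e..1} \<times> {1 - e..1}"
        by (rule proj_x[OF conjunct1[OF H]], rule proj_y[OF conjunct2[OF H]])
      then show "(f2 M a ^^ n) x \<in> cbox 0 (e *\<^sub>R One) \<and> (f2 M a ^^ n) y \<in> cbox ((1 - e) *\<^sub>R One) One"
        by (simp add: cbox_prod_simps)
    qed
  qed
  then show ?thesis by simp
qed

lemma AE_recurrent_first_coordinates: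
  "AE p in (lborel :: ((real \<times> 'b::euclidean_space) \<times> (real \<times> 'b)) measure).
    fst (fst p) \<in> {0..1} \<and> fst (snd p) \<in> {0..1} \<longrightarrow>
    fst (fst p) \<in> {0..<1} \<and> fst (snd p) \<in> {0..<1} \<and> recurrent (fst (fst p), fst (snd p))"
proof -
  have "Measurable.pred (borel \<Otimes>\<^sub>M borel) (\<lambda>z :: real \<times> real.
      fst z \<in> {0..1} \<and> snd z \<in> {0..1} \<longrightarrow> fst z \<in> {0..<1} \<and> snd z \<in> {0..<1} \<and> recurrent z)"
    by measurable
  from AE_lborel_fst_fst[OF this AE_recurrent] show ?thesis by (rule eventually_mono) simp
qed

lemma AE_Li_Yorke_f2:
  "AE p in lborel.
    fst p \<in> {0..1::real} \<times> {0..1::real} \<and> snd p \<in> {0..1::real} \<times> {0..1::real} \<longrightarrow>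
      liminf (\<lambda>n. ereal (dist ((f2 M a ^^ n) (fst p)) ((f2 M a ^^ n) (snd p)))) = 0 \<and>
      limsup (\<lambda>n. ereal (dist ((f2 M a ^^ n) (fst p)) ((f2 M a ^^ n) (snd p)))) = ereal (sqrt 2)"
  using AE_recurrent_first_coordinates
  by (rule eventually_mono) (auto intro!: Li_Yorke_f2[THEN conjunct1] Li_Yorke_f2[THEN conjunct2])

lemma AE_Li_Yorke_f3:
  "AE p in lborel.
    fst p \<in> {0..1::real} \<times> {0..1::real} \<times> {0..1::real} \<and>
    snd p \<in> {0..1::real} \<times> {0..1::real} \<times> {0..1::real} \<longrightarrow>
      liminf (\<lambda>n. ereal (dist ((f3 M a b_a ^^ n) (fst p)) ((f3 M a b_a ^^ n) (snd p)))) = 0 \<and>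
      limsup (\<lambda>n. ereal (dist ((f3 M a b_a ^^ n) (fst p)) ((f3 M a b_a ^^ n) (snd p)))) = ereal (sqrt 3)"
  using AE_recurrent_first_coordinates
  by (rule eventually_mono) (auto intro!: Li_Yorke_f3[THEN conjunct1] Li_Yorke_f3[THEN conjunct2])

end

theorem mainTheorem5:
  fixes M :: nat and a :: real
  assumes "M \<ge> 2" and "0 < a" and "a < 1 / real M"
  shows "(AE p in lborel.
            fst p \<in> {0..1::real} \<times> {0..1::real} \<and> snd p \<in> {0..1::real} \<times> {0..1::real} \<longrightarrow>
              liminf (\<lambda>n. ereal (dist ((f2 M a ^^ n) (fst p)) ((f2 M a ^^ n) (snd p)))) = 0 \<and>
              limsup (\<lambda>n. ereal (dist ((f2 M a ^^ n) (fst p)) ((f2 M a ^^ n) (snd p)))) = ereal (sqrt 2))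
       \<and> (AE p in lborel.
            fst p \<in> {0..1::real} \<times> {0..1::real} \<times> {0..1::real} \<and>
            snd p \<in> {0..1::real} \<times> {0..1::real} \<times> {0..1::real} \<longrightarrow>
              liminf (\<lambda>n. ereal (dist ((f3 M a (1 / real M - a) ^^ n) (fst p))
                                        ((f3 M a (1 / real M - a) ^^ n) (snd p)))) = 0 \<and>
              limsup (\<lambda>n. ereal (dist ((f3 M a (1 / real M - a) ^^ n) (fst p))
                                        ((f3 M a (1 / real M - a) ^^ n) (snd p)))) = ereal (sqrt 3))"
proof -
  interpret tau_params M a using assms by unfold_locales
  show ?thesis using AE_Li_Yorke_f2 AE_Li_Yorke_f3 unfolding b_a_def by blast
qed

end
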